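(* Let $S\subseteq\mathcal S_d$ be nonempty, $[d]$ partitioned into groups $G_1,\dots,G_g$, $\bar\alpha,\bar\beta\in[0,1]^g$, $k\in[d]$, and $\alpha\ge 1$. Let $\mathcal{F}\subseteq\mathcal S_d$ be the (nonempty) set of $(\bar\alpha,\bar\beta)$-$k$-fair rankings. If $\tilde\pi\in\mathcal F$ satisfies $\sum_{\pi\in S}F(\pi,\tilde\pi)\le\alpha\min_{\sigma\in\mathcal F}\sum_{\pi\in S}F(\pi,\sigma)$, then $\sum_{\pi\in S}\kappa(\pi,\tilde\pi)\le 2\alpha\min_{\sigma\in\mathcal F}\sum_{\pi\in S}\kappa(\pi,\sigma)$.
   Context: $\mathcal{S}_d$ is the set of rankings of $[d]$, $\pi(a)$ the rank of $a$. A ranking is $(\bar\alpha,\bar\beta)$-$k$-fair if for every $i\in[g]$ its top $k$ positions contain at least $\lfloor\alpha_i k\rfloor$ and at most $\lceil\beta_i k\rceil$ members of $G_i$. $F(\pi,\sigma)=\sum_{i\in[d]}|\pi(i)-\sigma(i)|$ is the Spearman footrule distance; $\kappa(\pi,\sigma)$ is the Kendall-tau distance, the number of unordered pairs $\{a,b\}\subseteq[d]$ ordered differently by $\pi$ and $\sigma$. *)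

theory Defs
  imports Complex_Main "HOL-Combinatorics.Permutations"
begin

text \<open>A ranking of [d] = {1..d} is a permutation p of {1..d}; p a is the rank of item a.\<close>
definition rankings :: "nat \<Rightarrow> (nat \<Rightarrow> nat) set" where
  "rankings d = {p. p permutes {1..d}}"

definition k_fair :: "nat \<Rightarrow> (nat \<Rightarrow> nat set) \<Rightarrow> (nat \<Rightarrow> real) \<Rightarrow> (nat \<Rightarrow> real)
    \<Rightarrow> nat \<Rightarrow> (nat \<Rightarrow> nat) \<Rightarrow> bool" where
  "k_fair g G al be k p \<longleftrightarrow>
     (\<forall>i\<in>{1..g}.
        \<lfloor>al i * real k\<rfloor> \<le> int (card {a \<in> G i. p a \<le> k}) \<and>
        int (card {a \<in> G i. p a \<le> k}) \<le> \<lceil>be i * real k\<rceil>)"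

definition fair_rankings :: "nat \<Rightarrow> nat \<Rightarrow> (nat \<Rightarrow> nat set) \<Rightarrow> (nat \<Rightarrow> real) \<Rightarrow> (nat \<Rightarrow> real)
    \<Rightarrow> nat \<Rightarrow> (nat \<Rightarrow> nat) set" where
  "fair_rankings d g G al be k = {p \<in> rankings d. k_fair g G al be k p}"

definition footrule :: "nat \<Rightarrow> (nat \<Rightarrow> nat) \<Rightarrow> (nat \<Rightarrow> nat) \<Rightarrow> nat" where
  "footrule d p sigma = (\<Sum>i\<in>{1..d}. nat \<bar>int (p i) - int (sigma i)\<bar>)"

definition kendall :: "nat \<Rightarrow> (nat \<Rightarrow> nat) \<Rightarrow> (nat \<Rightarrow> nat) \<Rightarrow> nat" where
  "kendall d p sigma = card {(a, b). a \<in> {1..d} \<and> b \<in> {1..d} \<and> a < b \<and>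
                                      (p a < p b) \<noteq> (sigma a < sigma b)}"

end

theory Submission
  imports Defs
begin

text \<open>By the Diaconis--Graham inequalities, the Kendall tau distance and the footrule satisfy
  \<open>\<kappa> \<le> F \<le> 2\<kappa>\<close> pointwise, hence also for sums over \<open>S\<close>. So if \<open>\<sigma>\<close> is a fair ranking minimising
  the summed Kendall tau distance, then
  \<open>\<Sum>\<kappa>(\<pi>,\<tilde>\<pi>) \<le> \<Sum>F(\<pi>,\<tilde>\<pi>) \<le> \<alpha> \<Sum>F(\<pi>,\<sigma>) \<le> 2\<alpha> \<Sum>\<kappa>(\<pi>,\<sigma>)\<close>.\<close>

lemma approximation_transfer:
  fixes f h :: "'a \<Rightarrow> nat" and c :: nat and alpha :: real
  assumes "finite F" "x \<in> F" "alpha \<ge> 0"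
    and f_le_h: "\<And>y. y \<in> F \<Longrightarrow> f y \<le> h y"
    and h_le_c_f: "\<And>y. y \<in> F \<Longrightarrow> h y \<le> c * f y"
    and approx: "real (h x) \<le> alpha * real (Min (h ` F))"
  shows "real (f x) \<le> c * alpha * real (Min (f ` F))"
proof -
  have "Min (f ` F) \<in> f ` F" using assms(1,2) by (intro Min_in) auto
  then obtain y where y: "y \<in> F" "f y = Min (f ` F)" by auto
  have "real (f x) \<le> real (h x)" using f_le_h[OF \<open>x \<in> F\<close>] by simp
  also have "\<dots> \<le> alpha * real (Min (h ` F))" using approx .
  also have "\<dots> \<le> alpha * real (h y)"
    using y(1) assms(1,3) by (intro mult_left_mono) auto
  also have "\<dots> \<le> alpha * real (c * f y)"
    using h_le_c_f[OF y(1)] assms(3) by (simp add: mult_left_mono del: of_nat_mult)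
  finally show ?thesis using y(2) by (simp add: mult_ac)
qed

definition discordant_pairs :: "nat \<Rightarrow> (nat \<Rightarrow> nat) \<Rightarrow> (nat \<Rightarrow> nat) \<Rightarrow> (nat \<times> nat) set" where
  "discordant_pairs d p s = {(x, y). x \<in> {1..d} \<and> y \<in> {1..d} \<and> p x < p y \<and> s y < s x}"

lemma kendall_eq_card_discordant_pairs:
  assumes p: "p permutes {1..d}" and s: "s permutes {1..d}"
  shows "kendall d p s = card (discordant_pairs d p s)"
proof -
  let ?K = "{(a, b). a \<in> {1..d} \<and> b \<in> {1..d} \<and> a < b \<and> (p a < p b) \<noteq> (s a < s b)}"
  have "inj p" "inj s" using p s permutes_inj by auto
  have "bij_betw (\<lambda>(a, b). if p a < p b then (a, b) else (b, a)) ?K (discordant_pairs d p s)"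
  proof (rule bij_betw_byWitness[where f' = "\<lambda>(x, y). (min x y, max x y)"])
    show "\<forall>z\<in>?K. (\<lambda>(x, y). (min x y, max x y)) ((\<lambda>(a, b). if p a < p b then (a, b) else (b, a)) z) = z"
      by auto
    show "\<forall>z\<in>discordant_pairs d p s. (\<lambda>(a, b). if p a < p b then (a, b) else (b, a))
             ((\<lambda>(x, y). (min x y, max x y)) z) = z"
      by (auto simp: discordant_pairs_def min_def max_def)
    show "(\<lambda>(a, b). if p a < p b then (a, b) else (b, a)) ` ?K \<subseteq> discordant_pairs d p s"
    proof (rule image_subsetI, clarify)
      fix a b assume ab: "a \<in> {1..d}" "b \<in> {1..d}" "a < b" "(p a < p b) \<noteq> (s a < s b)"
      then have "p a \<noteq> p b" "s a \<noteq> s b" using \<open>inj p\<close> \<open>inj s\<close> by (auto dest: injD)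
      with ab show "(if p a < p b then (a, b) else (b, a)) \<in> discordant_pairs d p s"
        by (auto simp: discordant_pairs_def)
    qed
    show "(\<lambda>(x, y). (min x y, max x y)) ` discordant_pairs d p s \<subseteq> ?K"
    proof (rule image_subsetI)
      fix z assume "z \<in> discordant_pairs d p s"
      then obtain x y where xy: "z = (x, y)" "x \<in> {1..d}" "y \<in> {1..d}" "p x < p y" "s y < s x"
        by (auto simp: discordant_pairs_def)
      then have "x \<noteq> y" by auto
      with xy show "(\<lambda>(x, y). (min x y, max x y)) z \<in> ?K" by (auto simp: min_def max_def)
    qed
  qed
  then show ?thesis unfolding kendall_def by (rule bij_betw_same_card)
qed

lemma card_rank_less:
  assumes s: "s permutes {1..d}" and a: "a \<in> {1..d}"
  shows "card {b \<in> {1..d}. s b < s a} = s a - 1"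
proof -
  have "s a \<in> {1..d}" using permutes_in_image[OF s] a by simp
  have "s ` {b \<in> {1..d}. s b < s a} = {v \<in> s ` {1..d}. v < s a}" by auto
  also have "\<dots> = {1..<s a}" using \<open>s a \<in> {1..d}\<close> permutes_image[OF s] by auto
  finally have "card (s ` {b \<in> {1..d}. s b < s a}) = s a - 1" by simp
  moreover have "inj_on s {b \<in> {1..d}. s b < s a}"
    using permutes_inj[OF s] by (rule inj_on_subset) simp
  ultimately show ?thesis by (simp add: card_image)
qed

text \<open>A discordant pair \<open>(x, y)\<close> is charged to \<open>x\<close> if \<open>s y\<close> lies strictly between \<open>p x\<close> and
  \<open>s x\<close>, and to \<open>y\<close> otherwise, in which case \<open>s y \<le> p x < p y\<close>. By injectivity of \<open>s\<close> and \<open>p\<close>,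
  item \<open>c\<close> receives at most \<open>|p c - s c|\<close> charges.\<close>

lemma kendall_le_footrule:
  assumes p: "p permutes {1..d}" and s: "s permutes {1..d}"
  shows "kendall d p s \<le> footrule d p s"
proof -
  define A where "A x = {y \<in> {1..d}. p x < s y \<and> s y < s x}" for x
  define B where "B y = {x \<in> {1..d}. s y \<le> p x \<and> p x < p y}" for y
  have card_A: "card (A c) \<le> s c - p c - 1" for c
  proof -
    have "card (A c) \<le> card {p c<..<s c}"
      using inj_on_subset[OF permutes_inj[OF s] subset_UNIV]
      by (rule card_inj_on_le) (auto simp: A_def)
    then show ?thesis by simp
  qed
  have card_B: "card (B c) \<le> p c - s c" for c
  proof -
    have "card (B c) \<le> card {s c..<p c}"
      using inj_on_subset[OF permutes_inj[OF p] subset_UNIV]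
      by (rule card_inj_on_le) (auto simp: B_def)
    then show ?thesis by simp
  qed
  have "discordant_pairs d p s \<subseteq> (SIGMA x:{1..d}. A x) \<union> prod.swap ` (SIGMA y:{1..d}. B y)"
  proof (rule subsetI)
    fix z assume "z \<in> discordant_pairs d p s"
    then obtain x y where xy: "z = (x, y)" "x \<in> {1..d}" "y \<in> {1..d}" "p x < p y" "s y < s x"
      by (auto simp: discordant_pairs_def)
    show "z \<in> (SIGMA x:{1..d}. A x) \<union> prod.swap ` (SIGMA y:{1..d}. B y)"
    proof (cases "p x < s y")
      case True
      then show ?thesis using xy by (auto simp: A_def)
    next
      case False
      then have "(y, x) \<in> (SIGMA y:{1..d}. B y)" using xy by (auto simp: B_def)
      then show ?thesis using xy by force
    qed
  qed
  then have "card (discordant_pairs d p s)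
      \<le> card ((SIGMA x:{1..d}. A x) \<union> prod.swap ` (SIGMA y:{1..d}. B y))"
    by (rule card_mono[rotated]) (simp add: A_def B_def)
  also have "\<dots> \<le> card (SIGMA x:{1..d}. A x) + card (prod.swap ` (SIGMA y:{1..d}. B y))"
    by (rule card_Un_le)
  also have "\<dots> = (\<Sum>c\<in>{1..d}. card (A c) + card (B c))"
    by (simp add: card_image A_def B_def sum.distrib)
  also have "\<dots> \<le> footrule d p s"
    unfolding footrule_def
  proof (rule sum_mono)
    fix c
    show "card (A c) + card (B c) \<le> nat \<bar>int (p c) - int (s c)\<bar>"
      using card_A[of c] card_B[of c] by linarith
  qed
  finally show ?thesis using kendall_eq_card_discordant_pairs[OF p s] by simp
qed

lemma rank_gap_le_card_discordant:
  assumes p: "p permutes {1..d}" and s: "s permutes {1..d}" and a: "a \<in> {1..d}"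
  shows "s a - p a \<le> card {b \<in> {1..d}. p a < p b \<and> s b < s a}"
proof -
  have "p a \<in> {1..d}" "s a \<in> {1..d}"
    using a permutes_in_image[OF p] permutes_in_image[OF s] by simp_all
  then have "s a - p a = card {b \<in> {1..d}. s b < s a} - card {b \<in> {1..d}. p b < p a}"
    using card_rank_less[OF s a] card_rank_less[OF p a] by simp
  also have "\<dots> \<le> card ({b \<in> {1..d}. s b < s a} - {b \<in> {1..d}. p b < p a})"
    by (rule diff_card_le_card_Diff) simp
  also have "\<dots> \<le> card {b \<in> {1..d}. p a < p b \<and> s b < s a}"
  proof (rule card_mono, simp, rule subsetI)
    fix b assume b: "b \<in> {b \<in> {1..d}. s b < s a} - {b \<in> {1..d}. p b < p a}"
    then have "p b \<noteq> p a" using permutes_inj[OF p] by (auto dest: injD)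
    with b show "b \<in> {b \<in> {1..d}. p a < p b \<and> s b < s a}" by auto
  qed
  finally show ?thesis .
qed

lemma footrule_le_twice_kendall:
  assumes p: "p permutes {1..d}" and s: "s permutes {1..d}"
  shows "footrule d p s \<le> 2 * kendall d p s"
proof -
  define Out where "Out a = {b \<in> {1..d}. p a < p b \<and> s b < s a}" for a
  define In where "In a = {b \<in> {1..d}. s a < s b \<and> p b < p a}" for a
  have "discordant_pairs d p s = (SIGMA a:{1..d}. Out a)"
    by (auto simp: discordant_pairs_def Out_def)
  then have card_Out: "(\<Sum>a\<in>{1..d}. card (Out a)) = card (discordant_pairs d p s)"
    by (simp add: Out_def)
  have "(SIGMA a:{1..d}. In a) = prod.swap ` discordant_pairs d p s"
    by (force simp: discordant_pairs_def In_def)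
  then have "card (SIGMA a:{1..d}. In a) = card (discordant_pairs d p s)"
    by (simp add: card_image)
  then have card_In: "(\<Sum>a\<in>{1..d}. card (In a)) = card (discordant_pairs d p s)"
    by (simp add: In_def)
  have "footrule d p s \<le> (\<Sum>a\<in>{1..d}. card (Out a) + card (In a))"
    unfolding footrule_def
  proof (rule sum_mono)
    fix a assume a: "a \<in> {1..d}"
    show "nat \<bar>int (p a) - int (s a)\<bar> \<le> card (Out a) + card (In a)"
      using rank_gap_le_card_discordant[OF p s a] rank_gap_le_card_discordant[OF s p a]
      unfolding Out_def In_def by linarith
  qed
  also have "\<dots> = 2 * kendall d p s"
    using card_Out card_In kendall_eq_card_discordant_pairs[OF p s] by (simp add: sum.distrib)
  finally show ?thesis .
qed

theorem theoremA2:
  fixes d g k :: nat and G :: "nat \<Rightarrow> nat set" and al be :: "nat \<Rightarrow> real"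
    and alpha :: real and S :: "(nat \<Rightarrow> nat) set" and pit :: "nat \<Rightarrow> nat"
  assumes S: "S \<subseteq> rankings d" "S \<noteq> {}"
    and G_nonempty: "\<forall>i\<in>{1..g}. G i \<noteq> {}"
    and G_disjoint: "\<forall>i\<in>{1..g}. \<forall>j\<in>{1..g}. i \<noteq> j \<longrightarrow> G i \<inter> G j = {}"
    and G_cover: "(\<Union>i\<in>{1..g}. G i) = {1..d}"
    and al_range: "\<forall>i\<in>{1..g}. 0 \<le> al i \<and> al i \<le> 1"
    and be_range: "\<forall>i\<in>{1..g}. 0 \<le> be i \<and> be i \<le> 1"
    and k: "k \<in> {1..d}"
    and alpha: "alpha \<ge> 1"
    and F_nonempty: "fair_rankings d g G al be k \<noteq> {}"
    and pit: "pit \<in> fair_rankings d g G al be k"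
    and approx: "real (\<Sum>p\<in>S. footrule d p pit) \<le>
        alpha * real (Min ((\<lambda>sigma. \<Sum>p\<in>S. footrule d p sigma) ` fair_rankings d g G al be k))"
  shows "real (\<Sum>p\<in>S. kendall d p pit) \<le>
        2 * alpha * real (Min ((\<lambda>sigma. \<Sum>p\<in>S. kendall d p sigma) ` fair_rankings d g G al be k))"
proof -
  let ?F = "fair_rankings d g G al be k"
  have "finite (rankings d)"
    unfolding rankings_def using finite_permutations[of "{1..d}"] by simp
  then have finite_F: "finite ?F" by (simp add: fair_rankings_def)
  have S_perm: "p permutes {1..d}" if "p \<in> S" for p
    using S(1) that by (auto simp: rankings_def)
  have F_perm: "\<sigma> permutes {1..d}" if "\<sigma> \<in> ?F" for \<sigma>
    using that by (simp add: fair_rankings_def rankings_def)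
  have kendall_le_footrule_sum:
    "(\<Sum>p\<in>S. kendall d p \<sigma>) \<le> (\<Sum>p\<in>S. footrule d p \<sigma>)" if "\<sigma> \<in> ?F" for \<sigma>
    using S_perm F_perm[OF that] by (auto intro!: sum_mono kendall_le_footrule)
  have footrule_le_twice_kendall_sum:
    "(\<Sum>p\<in>S. footrule d p \<sigma>) \<le> 2 * (\<Sum>p\<in>S. kendall d p \<sigma>)" if "\<sigma> \<in> ?F" for \<sigma>
    unfolding sum_distrib_left
    using S_perm F_perm[OF that] by (auto intro!: sum_mono footrule_le_twice_kendall)
  show ?thesis
    using approximation_transfer[where f = "\<lambda>\<sigma>. \<Sum>p\<in>S. kendall d p \<sigma>"
        and h = "\<lambda>\<sigma>. \<Sum>p\<in>S. footrule d p \<sigma>" and c = 2,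
        OF finite_F pit _ kendall_le_footrule_sum footrule_le_twice_kendall_sum approx] alpha
    by simp
qed

end
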